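(* Let $h:\mathbb{R}\to\mathbb{R}$ be a smooth function with $h(T)=\pi/2$ for $T\le 0$, $0<h(T)<\pi/2$ for $0<T<1$, and $h(T)=0$ for $T\ge 1$. For $0\le T<1$ define $B(T)=\exp\left(\int_0^T \cot\bigl(h(z)\bigr)\,dz\right)$. Then $B(T)\to\infty$ as $T\to 1_-$, and for every integer $n\ge 0$ the $n$-th derivative of $1/B$ satisfies $\frac{d^n}{dT^n}\bigl(1/B(T)\bigr)\to 0$ as $T\to 1_-$.
   Context: Here $\cot$ denotes the cotangent; note that $\cot h(T)>0$ for $0<T<1$. *)

theory Defs
  imports "HOL-Analysis.Analysis"
begin

definition smooth :: "(real \<Rightarrow> real) \<Rightarrow> bool" where
  "smooth f \<longleftrightarrow> (\<forall>n x. ((deriv ^^ n) f) differentiable (at x))"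

definition Bfun :: "(real \<Rightarrow> real) \<Rightarrow> real \<Rightarrow> real" where
  "Bfun h T = exp (integral {0..T} (\<lambda>z. cot (h z)))"

end

(* Write F = 1 / B, so that F' = - (cot h) F.  By induction every derivative of F is F times a
   polynomial in cot h and the derivatives of h, and such a polynomial is bounded near T = 1 by
   C / (sin h)^m, because |cot h| <= 1 / sin h and the derivatives of h are bounded.  So it suffices
   that F / (sin h)^m -> 0.  Its logarithm has derivative - (cot h) (1 + m h').  As h(1) = h'(1) = 0,
   near T = 1 we have 1 + m h' >= 1/2, cos h >= 1/2 and sin h <= h <= 1 - T, so this derivative is
   at most - 1 / (4 (1 - T)), which is not integrable up to 1.  The case n = 0 gives B -> infinity. *)

theory Submission
  imports Defs
begin

inductive poly_closure :: "('a \<Rightarrow> real) set \<Rightarrow> ('a \<Rightarrow> real) \<Rightarrow> bool" for G where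
  const: "poly_closure G (\<lambda>x. c)"
| gen: "g \<in> G \<Longrightarrow> poly_closure G g"
| add: "poly_closure G f \<Longrightarrow> poly_closure G g \<Longrightarrow> poly_closure G (\<lambda>x. f x + g x)"
| mult: "poly_closure G f \<Longrightarrow> poly_closure G g \<Longrightarrow> poly_closure G (\<lambda>x. f x * g x)"

lemma poly_closure_has_real_derivative:
  assumes "poly_closure G f"
    and G_deriv: "\<And>g. g \<in> G \<Longrightarrow>
      \<exists>g'. poly_closure G g' \<and> (\<forall>x\<in>S. (g has_real_derivative g' x) (at x))"
  shows "\<exists>f'. poly_closure G f' \<and> (\<forall>x\<in>S. (f has_real_derivative f' x) (at x))"
  using assms(1)
proof induction
  case (const c)
  show ?case by (intro exI[of _ "\<lambda>x. 0"]) (auto intro: poly_closure.const)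
next
  case (gen g)
  then show ?case by (rule G_deriv)
next
  case (add f g)
  then obtain f' g' where "poly_closure G f'" "poly_closure G g'"
    "\<forall>x\<in>S. (f has_real_derivative f' x) (at x)" "\<forall>x\<in>S. (g has_real_derivative g' x) (at x)"
    by blast
  then show ?case
    by (intro exI[of _ "\<lambda>x. f' x + g' x"]) (auto intro: poly_closure.add DERIV_add)
next
  case (mult f g)
  then obtain f' g' where "poly_closure G f'" "poly_closure G g'"
    "\<forall>x\<in>S. (f has_real_derivative f' x) (at x)" "\<forall>x\<in>S. (g has_real_derivative g' x) (at x)"
    by blast
  with mult.hyps show ?case
    by (intro exI[of _ "\<lambda>x. f' x * g x + g' x * f x"]) (auto intro: poly_closure.intros DERIV_mult)
qed

lemma poly_closure_power_bound:
  fixes w :: "'a \<Rightarrow> real"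
  assumes "poly_closure G f"
    and w_ge_1: "eventually (\<lambda>x. 1 \<le> w x) F"
    and G_bound: "\<And>g. g \<in> G \<Longrightarrow> \<exists>C m. eventually (\<lambda>x. \<bar>g x\<bar> \<le> C * w x ^ m) F"
  shows "\<exists>C m. eventually (\<lambda>x. \<bar>f x\<bar> \<le> C * w x ^ m) F"
  using assms(1)
proof induction
  case (const c)
  show ?case by (intro exI[of _ "\<bar>c\<bar>"] exI[of _ 0]) simp
next
  case (gen g)
  then show ?case by (rule G_bound)
next
  case (add f g)
  then obtain C1 m1 C2 m2 where
    "eventually (\<lambda>x. \<bar>f x\<bar> \<le> C1 * w x ^ m1) F" "eventually (\<lambda>x. \<bar>g x\<bar> \<le> C2 * w x ^ m2) F"
    by blast
  then have "eventually (\<lambda>x. \<bar>f x + g x\<bar> \<le> (\<bar>C1\<bar> + \<bar>C2\<bar>) * w x ^ (m1 + m2)) F"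
    using w_ge_1
  proof eventually_elim
    case (elim x)
    have "C1 * w x ^ m1 \<le> \<bar>C1\<bar> * w x ^ (m1 + m2)" "C2 * w x ^ m2 \<le> \<bar>C2\<bar> * w x ^ (m1 + m2)"
      using elim(3) by (intro mult_mono power_increasing; simp)+
    with elim(1,2) show ?case by (simp add: distrib_right)
  qed
  then show ?case by blast
next
  case (mult f g)
  then obtain C1 m1 C2 m2 where
    "eventually (\<lambda>x. \<bar>f x\<bar> \<le> C1 * w x ^ m1) F" "eventually (\<lambda>x. \<bar>g x\<bar> \<le> C2 * w x ^ m2) F"
    by blast
  then have "eventually (\<lambda>x. \<bar>f x * g x\<bar> \<le> (C1 * C2) * w x ^ (m1 + m2)) F"
  proof eventually_elim
    case (elim x)
    have "\<bar>f x * g x\<bar> \<le> (C1 * w x ^ m1) * (C2 * w x ^ m2)"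
      unfolding abs_mult by (rule mult_mono) (use elim in auto)
    then show ?case by (simp add: power_add mult_ac)
  qed
  then show ?case by blast
qed

lemma higher_deriv_poly_closure_multiple:
  fixes F a :: "real \<Rightarrow> real"
  assumes "open S"
    and G_deriv: "\<And>g. g \<in> G \<Longrightarrow>
      \<exists>g'. poly_closure G g' \<and> (\<forall>x\<in>S. (g has_real_derivative g' x) (at x))"
    and "poly_closure G a"
    and F_deriv: "\<And>x. x \<in> S \<Longrightarrow> (F has_real_derivative a x * F x) (at x)"
  shows "\<exists>p. poly_closure G p \<and> (\<forall>x\<in>S. (deriv ^^ n) F x = p x * F x)"
proof (induction n)
  case 0
  show ?case by (intro exI[of _ "\<lambda>x. 1"]) (simp add: poly_closure.const)
next
  case (Suc n)
  then obtain p where p: "poly_closure G p" "\<forall>x\<in>S. (deriv ^^ n) F x = p x * F x"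
    by blast
  obtain p' where p': "poly_closure G p'" "\<forall>x\<in>S. (p has_real_derivative p' x) (at x)"
    using poly_closure_has_real_derivative[OF p(1) G_deriv] by blast
  have "(deriv ^^ Suc n) F x = (p' x + p x * a x) * F x" if "x \<in> S" for x
  proof -
    have "eventually (\<lambda>y. (deriv ^^ n) F y = p y * F y) (nhds x)"
      using eventually_nhds_in_open[OF \<open>open S\<close> that] by eventually_elim (use p(2) in blast)
    then have "(deriv ^^ Suc n) F x = deriv (\<lambda>y. p y * F y) x"
      by (simp add: deriv_cong_ev)
    also have "\<dots> = p' x * F x + a x * F x * p x"
      using p'(2) F_deriv that by (intro DERIV_imp_deriv DERIV_mult) auto
    finally show ?thesis by (simp add: algebra_simps)
  qed
  moreover have "poly_closure G (\<lambda>x. p' x + p x * a x)"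
    by (intro poly_closure.add poly_closure.mult p p' assms(3))
  ultimately show ?case by blast
qed

lemma filterlim_at_bot_at_left_if_deriv_le:
  fixes L L' :: "real \<Rightarrow> real"
  assumes "0 < a"
    and "eventually (\<lambda>x. (L has_real_derivative L' x) (at x) \<and> L' x \<le> - a / (b - x)) (at_left b)"
  shows "filterlim L at_bot (at_left b)"
proof -
  obtain t where "t < b" and L_deriv: "\<And>x. t < x \<Longrightarrow> x < b \<Longrightarrow>
      (L has_real_derivative L' x) (at x) \<and> L' x \<le> - a / (b - x)"
    using assms(2) unfolding eventually_at_left_field by blast
  define t0 where "t0 = (t + b) / 2"
  have t0: "t < t0" "t0 < b" using \<open>t < b\<close> by (auto simp: t0_def)
  define \<psi> where "\<psi> x = L x - a * ln (b - x)" for x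
  have \<psi>_deriv: "(\<psi> has_real_derivative L' x + a / (b - x)) (at x)" if "t < x" "x < b" for x
    using L_deriv[OF that] that unfolding \<psi>_def[abs_def]
    by (auto intro!: derivative_eq_intros simp: field_simps)
  have "\<psi> x \<le> \<psi> t0" if "t0 < x" "x < b" for x
  proof (rule DERIV_nonpos_imp_decreasing_open[of t0 x \<psi>])
    show "continuous_on {t0..x} \<psi>"
      using t0 that by (intro continuous_at_imp_continuous_on ballI DERIV_isCont[OF \<psi>_deriv]) auto
    show "\<exists>D. (\<psi> has_real_derivative D) (at y) \<and> D \<le> 0" if "t0 < y" "y < x" for y
      using \<psi>_deriv[of y] L_deriv[of y] t0 that \<open>x < b\<close> by auto
  qed (use that in auto)
  then have "eventually (\<lambda>x. L x \<le> \<psi> t0 + a * ln (b - x)) (at_left b)"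
    unfolding eventually_at_left_field \<psi>_def using t0 by (intro exI[of _ t0]) force
  moreover have "filterlim (\<lambda>x. \<psi> t0 + a * ln (b - x)) at_bot (at_left b)"
  proof -
    have "filterlim (\<lambda>x. b - x) (at_right 0) (at_left b)"
      unfolding filterlim_at
      by (auto simp: eventually_at_left_field intro!: tendsto_eq_intros exI[of _ "b - 1"])
    then have "filterlim (\<lambda>x. ln (b - x)) at_bot (at_left b)"
      by (rule filterlim_compose[OF ln_at_0])
    then have "filterlim (\<lambda>x. a * ln (b - x)) at_bot (at_left b)"
      by (rule filterlim_tendsto_pos_mult_at_bot[OF tendsto_const \<open>0 < a\<close>])
    then show ?thesis
      by (subst filterlim_tendsto_add_at_bot_iff[OF tendsto_const])
  qed
  ultimately show ?thesis by (rule filterlim_at_bot_mono[rotated])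
qed

locale cutoff_angle =
  fixes h :: "real \<Rightarrow> real"
  assumes smooth: "smooth h"
    and h_nonpos: "\<And>T. T \<le> 0 \<Longrightarrow> h T = pi / 2"
    and h_between: "\<And>T. 0 < T \<Longrightarrow> T < 1 \<Longrightarrow> 0 < h T \<and> h T < pi / 2"
    and h_ge_1: "\<And>T. 1 \<le> T \<Longrightarrow> h T = 0"
begin

lemma has_real_derivative_higher_deriv:
  "((deriv ^^ k) h has_real_derivative (deriv ^^ Suc k) h x) (at x)"
  using smooth unfolding smooth_def by (simp add: DERIV_deriv_iff_real_differentiable)

lemma has_real_derivative_h: "(h has_real_derivative deriv h x) (at x)"
  using has_real_derivative_higher_deriv[of 0] by simp

lemma tendsto_higher_deriv_at_left_1: "((deriv ^^ k) h \<longlongrightarrow> (deriv ^^ k) h 1) (at_left 1)"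
  using DERIV_isCont[OF has_real_derivative_higher_deriv] by (simp add: isCont_def filterlim_at_split)

lemma h_nonneg: "0 \<le> h x"
proof (cases "x \<le> 0")
  case True
  then show ?thesis using h_nonpos[of x] pi_gt_zero by linarith
next
  case False
  then show ?thesis using h_between[of x] h_ge_1[of x] by (cases "x < 1") auto
qed

lemma sin_h_pos: "0 \<le> x \<Longrightarrow> x < 1 \<Longrightarrow> 0 < sin (h x)"
  using h_nonpos[of 0] h_between[of x] pi_gt_zero
  by (intro sin_gt_zero) (smt (verit) field_sum_of_halves)+

lemma deriv_h_1: "deriv h 1 = 0"
  by (rule DERIV_local_min[OF has_real_derivative_h, of 1]) (auto simp: h_ge_1 h_nonneg)

lemma eventually_h_le_dist_1: "eventually (\<lambda>x. h x \<le> 1 - x) (at_left 1)"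
proof -
  have "(deriv h \<longlongrightarrow> 0) (nhds 1)"
    using DERIV_isCont[OF has_real_derivative_higher_deriv[of 1 1]]
    unfolding deriv_h_1[symmetric] by (simp add: isCont_def tendsto_at_iff_tendsto_nhds)
  then have "eventually (\<lambda>y. \<bar>deriv h y\<bar> < 1) (nhds 1)"
    using tendsto_rabs_zero order_tendstoD(2) zero_less_one by blast
  then obtain e where "0 < e" and e: "\<And>y. dist y 1 < e \<Longrightarrow> \<bar>deriv h y\<bar> < 1"
    by (auto simp: eventually_nhds_metric)
  have "h x \<le> 1 - x" if "1 - e < x" "x < 1" for x
  proof -
    have "norm (h 1 - h x) \<le> 1 * norm (1 - x)"
    proof (rule field_differentiable_bound[of "{x..1}"])
      show "(h has_field_derivative deriv h z) (at z within {x..1})" for z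
        by (rule has_field_derivative_at_within[OF has_real_derivative_h])
      show "norm (deriv h z) \<le> 1" if "z \<in> {x..1}" for z
        using e[of z] that \<open>1 - e < x\<close> by (auto simp: dist_real_def)
    qed (use that in auto)
    then show ?thesis using h_ge_1[of 1] that by simp
  qed
  then show ?thesis
    unfolding eventually_at_left_field using \<open>0 < e\<close> by (intro exI[of _ "1 - e"]) auto
qed

lemma has_real_derivative_integral_cot_h:
  assumes "0 < x" "x < 1"
  shows "((\<lambda>T. integral {0..T} (\<lambda>z. cot (h z))) has_real_derivative cot (h x)) (at x)"
proof -
  define b where "b = (1 + x) / 2"
  have b: "x < b" "b < 1" using assms by (auto simp: b_def)
  have "continuous_on {0..b} (\<lambda>z. cot (h z))"
  proof (intro continuous_at_imp_continuous_on ballI)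
    fix z assume "z \<in> {0..b}"
    then show "isCont (\<lambda>z. cot (h z)) z"
      using sin_h_pos[of z] b DERIV_isCont[OF has_real_derivative_h] by (intro isCont_cot') auto
  qed
  from integral_has_real_derivative[OF this, of x] assms b
  show ?thesis by (simp add: at_within_Icc_at)
qed

lemma has_real_derivative_inverse_Bfun:
  assumes "0 < x" "x < 1"
  shows "((\<lambda>T. 1 / Bfun h T) has_real_derivative - cot (h x) * (1 / Bfun h x)) (at x)"
  unfolding Bfun_def
  by (auto intro!: derivative_eq_intros has_real_derivative_integral_cot_h assms
      simp: power2_eq_square)

definition generators :: "(real \<Rightarrow> real) set" where
  "generators = insert (\<lambda>x. cot (h x)) (range (\<lambda>k. (deriv ^^ k) h))"

lemma generators_has_real_derivative:
  assumes "g \<in> generators"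
  shows "\<exists>g'. poly_closure generators g' \<and> (\<forall>x\<in>{0<..<1}. (g has_real_derivative g' x) (at x))"
proof (cases "g = (\<lambda>x. cot (h x))")
  case True
  have "((\<lambda>x. cot (h x)) has_real_derivative
      (-1) * ((deriv ^^ 1) h x * (1 + cot (h x) * cot (h x)))) (at x)" if "0 < x" "x < 1" for x
  proof -
    have "sin (h x) \<noteq> 0" using sin_h_pos[of x] that by simp
    moreover from this have "- inverse ((sin (h x))\<^sup>2) * deriv h x
        = (-1) * ((deriv ^^ 1) h x * (1 + cot (h x) * cot (h x)))"
      using sin_cos_squared_add[of "h x"] by (simp add: cot_def field_simps power2_eq_square)
    ultimately show ?thesis
      by (intro DERIV_cong[OF DERIV_chain2[OF DERIV_cot has_real_derivative_h]])
  qed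
  moreover have "poly_closure generators (\<lambda>x. (-1) * ((deriv ^^ 1) h x * (1 + cot (h x) * cot (h x))))"
    by (intro poly_closure.mult poly_closure.add poly_closure.const poly_closure.gen)
      (auto simp: generators_def intro: range_eqI[where x = 1])
  ultimately show ?thesis using True by auto
next
  case False
  then obtain k where "g = (deriv ^^ k) h" using assms by (auto simp: generators_def)
  moreover have "poly_closure generators ((deriv ^^ Suc k) h)"
    unfolding generators_def by (intro poly_closure.gen insertI2 rangeI)
  ultimately show ?thesis using has_real_derivative_higher_deriv by blast
qed

lemma generators_power_bound:
  assumes "g \<in> generators"
  shows "\<exists>C m. eventually (\<lambda>x. \<bar>g x\<bar> \<le> C * (1 / sin (h x)) ^ m) (at_left 1)"
proof (cases "g = (\<lambda>x. cot (h x))")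
  case True
  have "eventually (\<lambda>x. \<bar>cot (h x)\<bar> \<le> 1 * (1 / sin (h x)) ^ 1) (at_left 1)"
    using eventually_at_left_real[OF zero_less_one]
  proof eventually_elim
    case (elim x)
    then have "0 < sin (h x)" using sin_h_pos[of x] by simp
    then show ?case by (simp add: cot_def abs_divide divide_right_mono)
  qed
  then show ?thesis using True by blast
next
  case False
  then obtain k where k: "g = (deriv ^^ k) h" using assms by (auto simp: generators_def)
  have "eventually (\<lambda>x. \<bar>(deriv ^^ k) h x\<bar> < \<bar>(deriv ^^ k) h 1\<bar> + 1) (at_left 1)"
    using tendsto_rabs[OF tendsto_higher_deriv_at_left_1] by (rule order_tendstoD) simp
  then have "eventually (\<lambda>x. \<bar>g x\<bar> \<le> (\<bar>(deriv ^^ k) h 1\<bar> + 1) * (1 / sin (h x)) ^ 0) (at_left 1)"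
    unfolding k by eventually_elim simp
  then show ?thesis by blast
qed

lemma higher_deriv_inverse_Bfun:
  "\<exists>p. poly_closure generators p \<and>
     (\<forall>x\<in>{0<..<1}. (deriv ^^ n) (\<lambda>T. 1 / Bfun h T) x = p x * (1 / Bfun h x))"
proof (rule higher_deriv_poly_closure_multiple[OF _ generators_has_real_derivative])
  show "poly_closure generators (\<lambda>x. (-1) * cot (h x))"
    by (intro poly_closure.mult poly_closure.const poly_closure.gen) (simp add: generators_def)
  show "((\<lambda>T. 1 / Bfun h T) has_real_derivative (-1) * cot (h x) * (1 / Bfun h x)) (at x)"
    if "x \<in> {0<..<1}" for x
    using has_real_derivative_inverse_Bfun[of x] that by simp
qed auto

lemma inverse_Bfun_div_sin_power_tendsto_0:
  "((\<lambda>x. 1 / Bfun h x / sin (h x) ^ m) \<longlongrightarrow> 0) (at_left 1)"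
proof -
  define L where "L x = - integral {0..x} (\<lambda>z. cot (h z)) - real m * ln (sin (h x))" for x
  define L' where "L' x = - cot (h x) * (1 + real m * deriv h x)" for x
  have L_deriv: "(L has_real_derivative L' x) (at x)" if "0 < x" "x < 1" for x
  proof -
    have "0 < sin (h x)" using sin_h_pos[of x] that by simp
    then have "(L has_real_derivative
        - cot (h x) - real m * (cos (h x) * deriv h x / sin (h x))) (at x)"
      unfolding L_def[abs_def]
      by (auto intro!: derivative_eq_intros has_real_derivative_integral_cot_h
          has_real_derivative_h that)
    then show ?thesis by (rule DERIV_cong) (simp add: L'_def cot_def algebra_simps)
  qed
  have "(h \<longlongrightarrow> 0) (at_left 1)"
    using tendsto_higher_deriv_at_left_1[of 0] h_ge_1[of 1] by simp
  then have "((\<lambda>x. cos (h x)) \<longlongrightarrow> 1) (at_left 1)"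
    using tendsto_cos by fastforce
  then have "eventually (\<lambda>x. 1/2 < cos (h x)) (at_left 1)"
    by (rule order_tendstoD(1)) simp
  then have cos_ge: "eventually (\<lambda>x. 1/2 \<le> cos (h x)) (at_left 1)"
    by eventually_elim simp
  have "((\<lambda>x. 1 + real m * deriv h x) \<longlongrightarrow> 1) (at_left 1)"
    using tendsto_higher_deriv_at_left_1[of 1] deriv_h_1 by (auto intro!: tendsto_eq_intros)
  then have "eventually (\<lambda>x. 1/2 < 1 + real m * deriv h x) (at_left 1)"
    by (rule order_tendstoD(1)) simp
  then have factor_ge: "eventually (\<lambda>x. 1/2 \<le> 1 + real m * deriv h x) (at_left 1)"
    by eventually_elim simp
  have "eventually (\<lambda>x. (L has_real_derivative L' x) (at x) \<and> L' x \<le> - (1/4) / (1 - x)) (at_left 1)"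
    using cos_ge factor_ge eventually_h_le_dist_1 eventually_at_left_real[OF zero_less_one]
  proof eventually_elim
    case (elim x)
    then have s: "0 < sin (h x)" "sin (h x) \<le> 1 - x"
      using sin_h_pos[of x] sin_x_le_x[of "h x"] h_nonneg[of x] by auto
    have "(1/2) / (1 - x) \<le> cos (h x) / sin (h x)"
      using elim s by (intro frac_le) auto
    then have "(1/2) / (1 - x) * (1/2) \<le> cot (h x) * (1 + real m * deriv h x)"
      unfolding cot_def using elim s by (intro mult_mono) auto
    then show ?case using L_deriv[of x] elim by (simp add: L'_def)
  qed
  then have "filterlim L at_bot (at_left 1)"
    by (rule filterlim_at_bot_at_left_if_deriv_le[rotated]) simp
  then have "((\<lambda>x. exp (L x)) \<longlongrightarrow> 0) (at_left 1)"
    by (rule filterlim_compose[OF exp_at_bot])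
  moreover have "eventually (\<lambda>x. exp (L x) = 1 / Bfun h x / sin (h x) ^ m) (at_left 1)"
    using eventually_at_left_real[OF zero_less_one]
  proof eventually_elim
    case (elim x)
    then have "0 < sin (h x)" using sin_h_pos[of x] by simp
    then show ?case
      by (simp add: L_def Bfun_def exp_diff exp_minus exp_of_nat_mult inverse_eq_divide)
  qed
  ultimately show ?thesis by (rule Lim_transform_eventually)
qed

lemma higher_deriv_inverse_Bfun_tendsto_0:
  "((deriv ^^ n) (\<lambda>T. 1 / Bfun h T) \<longlongrightarrow> 0) (at_left 1)"
proof -
  obtain p where p: "poly_closure generators p"
    and deriv_eq: "\<forall>x\<in>{0<..<1}. (deriv ^^ n) (\<lambda>T. 1 / Bfun h T) x = p x * (1 / Bfun h x)"
    using higher_deriv_inverse_Bfun by blast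
  have "eventually (\<lambda>x. 1 \<le> 1 / sin (h x)) (at_left 1)"
    using eventually_at_left_real[OF zero_less_one]
    by eventually_elim (use sin_h_pos in \<open>auto simp: field_simps\<close>)
  then obtain C m where bound: "eventually (\<lambda>x. \<bar>p x\<bar> \<le> C * (1 / sin (h x)) ^ m) (at_left 1)"
    using poly_closure_power_bound[OF p _ generators_power_bound] by blast
  have "eventually (\<lambda>x. norm ((deriv ^^ n) (\<lambda>T. 1 / Bfun h T) x)
      \<le> C * (1 / Bfun h x / sin (h x) ^ m)) (at_left 1)"
    using bound eventually_at_left_real[OF zero_less_one]
  proof eventually_elim
    case (elim x)
    have B: "0 < Bfun h x" by (simp add: Bfun_def)
    have "\<bar>p x\<bar> * (1 / Bfun h x) \<le> C * (1 / sin (h x)) ^ m * (1 / Bfun h x)"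
      using elim(1) B by (intro mult_right_mono) auto
    then show ?case using deriv_eq elim(2) B by (simp add: abs_mult power_one_over mult_ac)
  qed
  moreover have "((\<lambda>x. C * (1 / Bfun h x / sin (h x) ^ m)) \<longlongrightarrow> 0) (at_left 1)"
    by (intro tendsto_mult_right_zero inverse_Bfun_div_sin_power_tendsto_0)
  ultimately show ?thesis by (rule Lim_null_comparison)
qed

end

theorem mainTheorem1:
  fixes h :: "real \<Rightarrow> real"
  assumes "smooth h"
    and "\<And>T. T \<le> 0 \<Longrightarrow> h T = pi / 2"
    and "\<And>T. 0 < T \<Longrightarrow> T < 1 \<Longrightarrow> 0 < h T \<and> h T < pi / 2"
    and "\<And>T. 1 \<le> T \<Longrightarrow> h T = 0"
  shows "filterlim (Bfun h) at_top (at_left 1) \<and>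
         (\<forall>n::nat. (((deriv ^^ n) (\<lambda>T. 1 / Bfun h T)) \<longlongrightarrow> 0) (at_left 1))"
proof -
  interpret cutoff_angle h using assms by unfold_locales
  have "filterlim (\<lambda>x. inverse (1 / Bfun h x)) at_top (at_left 1)"
    using higher_deriv_inverse_Bfun_tendsto_0[of 0]
    by (intro filterlim_inverse_at_top) (auto simp: Bfun_def)
  then have "filterlim (Bfun h) at_top (at_left 1)" by simp
  with higher_deriv_inverse_Bfun_tendsto_0 show ?thesis by blast
qed

end
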